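(* Adaptive scale modularity is monotonic for all $M\ge 0$ and $\gamma\ge 2$: for every graph $G=(V,E)$, every clustering $C$ of $G$, and every $C$-consistent improvement $G'=(V,E')$ of $G$ (such that $Q_{M,\gamma}(G,C)$ and $Q_{M,\gamma}(G',C)$ are defined), $Q_{M,\gamma}(G',C)\ge Q_{M,\gamma}(G,C)$.
   Context: A (symmetric weighted) graph is a pair $G=(V,E)$ of a finite set $V$ and $E:V\times V\to\mathbb{R}_{\ge 0}$ symmetric; self loops allowed. A clustering is a partition of $V$ into nonempty disjoint clusters; write $i\sim_C j$ if $i,j$ lie in the same cluster of $C$. For $c\subseteq V$, $v_c=\sum_{i\in c}\sum_{j\in V}E(i,j)$ and $w_c=\sum_{i,j\in c}E(i,j)$. Adaptive scale modularity: $Q_{M,\gamma}(G,C)=\sum_{c\in C}\left(\frac{w_c}{M+\gamma v_c}-\left(\frac{v_c}{M+\gamma v_c}\right)^2\right)$, defined when all denominators are positive. A graph $G'=(V,E')$ is a $C$-consistent improvement of $G=(V,E)$ if $E'(i,j)\ge E(i,j)$ whenever $i\sim_C j$ and $E'(i,j)\le E(i,j)$ whenever $i\not\sim_C j$. *)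

theory Defs
  imports Complex_Main "HOL-Library.Disjoint_Sets"
begin

definition is_graph :: "'a set \<Rightarrow> ('a \<Rightarrow> 'a \<Rightarrow> real) \<Rightarrow> bool" where
  "is_graph V E \<longleftrightarrow> finite V \<and> (\<forall>i\<in>V. \<forall>j\<in>V. E i j \<ge> 0 \<and> E i j = E j i)"

definition is_clustering :: "'a set \<Rightarrow> 'a set set \<Rightarrow> bool" where
  "is_clustering V C \<longleftrightarrow> partition_on V C"

definition same_cluster :: "'a set set \<Rightarrow> 'a \<Rightarrow> 'a \<Rightarrow> bool" where
  "same_cluster C i j \<longleftrightarrow> (\<exists>c\<in>C. i \<in> c \<and> j \<in> c)"

definition vol :: "'a set \<Rightarrow> ('a \<Rightarrow> 'a \<Rightarrow> real) \<Rightarrow> 'a set \<Rightarrow> real" where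
  "vol V E c = (\<Sum>i\<in>c. \<Sum>j\<in>V. E i j)"

definition inner_weight :: "('a \<Rightarrow> 'a \<Rightarrow> real) \<Rightarrow> 'a set \<Rightarrow> real" where
  "inner_weight E c = (\<Sum>i\<in>c. \<Sum>j\<in>c. E i j)"

definition asm_quality :: "real \<Rightarrow> real \<Rightarrow> 'a set \<Rightarrow> ('a \<Rightarrow> 'a \<Rightarrow> real) \<Rightarrow> 'a set set \<Rightarrow> real" where
  "asm_quality M \<gamma> V E C =
     (\<Sum>c\<in>C. inner_weight E c / (M + \<gamma> * vol V E c) - (vol V E c / (M + \<gamma> * vol V E c))^2)"

definition asm_defined :: "real \<Rightarrow> real \<Rightarrow> 'a set \<Rightarrow> ('a \<Rightarrow> 'a \<Rightarrow> real) \<Rightarrow> 'a set set \<Rightarrow> bool" where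
  "asm_defined M \<gamma> V E C \<longleftrightarrow> (\<forall>c\<in>C. M + \<gamma> * vol V E c > 0)"

definition consistent_improvement ::
  "'a set \<Rightarrow> 'a set set \<Rightarrow> ('a \<Rightarrow> 'a \<Rightarrow> real) \<Rightarrow> ('a \<Rightarrow> 'a \<Rightarrow> real) \<Rightarrow> bool" where
  "consistent_improvement V C E E' \<longleftrightarrow>
     (\<forall>i\<in>V. \<forall>j\<in>V. (same_cluster C i j \<longrightarrow> E' i j \<ge> E i j) \<and>
                    (\<not> same_cluster C i j \<longrightarrow> E' i j \<le> E i j))"

end

theory Submission
  imports Defs
begin

text \<open>Write a cluster's volume as \<open>v = w + b\<close> with inner weight \<open>w\<close> and cut weight \<open>b\<close>, and
  let \<open>D = M + \<gamma> v\<close>. The cluster contributes \<open>x - x\<^sup>2 - b / D\<close> with \<open>x = v / D\<close>, and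
  \<open>M \<ge> 0\<close>, \<open>\<gamma> \<ge> 2\<close> force \<open>x \<le> 1/2\<close>, where \<open>x - x\<^sup>2\<close> is increasing. Raising \<open>w\<close> raises \<open>x\<close>
  and \<open>D\<close>, so every term improves; lowering \<open>b\<close> raises \<open>w / D\<close> and lowers \<open>v / D\<close>. A
  consistent improvement does both to every cluster, so each summand of the quality grows.\<close>

definition cut_weight :: "'a set \<Rightarrow> ('a \<Rightarrow> 'a \<Rightarrow> real) \<Rightarrow> 'a set \<Rightarrow> real" where
  "cut_weight V E c = (\<Sum>i\<in>c. \<Sum>j\<in>V - c. E i j)"

definition cluster_score :: "real \<Rightarrow> real \<Rightarrow> real \<Rightarrow> real \<Rightarrow> real" where
  "cluster_score M \<gamma> w b = w / (M + \<gamma> * (w + b)) - ((w + b) / (M + \<gamma> * (w + b)))\<^sup>2"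

lemma diff_square_mono:
  fixes x y :: real
  assumes "0 \<le> x" "x \<le> y" "y \<le> 1/2"
  shows "x - x\<^sup>2 \<le> y - y\<^sup>2"
proof -
  have "0 \<le> (y - x) * (1 - x - y)" using assms by (intro mult_nonneg_nonneg) auto
  thus ?thesis by (simp add: algebra_simps power2_eq_square)
qed

lemma cluster_score_mono_inner:
  fixes M \<gamma> w w' b :: real
  assumes "M \<ge> 0" "\<gamma> \<ge> 2" "b \<ge> 0" "0 \<le> w" "w \<le> w'" "M + \<gamma> * (w + b) > 0"
  shows "cluster_score M \<gamma> w b \<le> cluster_score M \<gamma> w' b"
proof -
  define v v' where "v = w + b" and "v' = w' + b"
  define D D' where "D = M + \<gamma> * v" and "D' = M + \<gamma> * v'"
  have D: "D > 0" using assms by (simp add: D_def v_def)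
  have v: "0 \<le> v" "v \<le> v'" using assms by (auto simp: v_def v'_def)
  have DD': "D \<le> D'" using v assms by (simp add: D_def D'_def mult_left_mono)
  with D have D': "D' > 0" by simp
  have score: "cluster_score M \<gamma> u b = (u + b) / (M + \<gamma> * (u + b)) - ((u + b) / (M + \<gamma> * (u + b)))\<^sup>2
      - b / (M + \<gamma> * (u + b))" for u
    by (simp add: cluster_score_def add_divide_distrib)
  have "v / D \<le> v' / D'"
  proof -
    have "v * D' \<le> v' * D" using v assms by (simp add: D_def D'_def algebra_simps mult_left_mono)
    thus ?thesis using D D' by (simp add: divide_simps mult.commute)
  qed
  moreover have "v' / D' \<le> 1/2"
  proof -
    have "2 * v' \<le> \<gamma> * v'" using assms v by (intro mult_right_mono) auto
    hence "2 * v' \<le> D'" using assms by (simp add: D'_def)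
    thus ?thesis using D' by (simp add: divide_simps)
  qed
  ultimately have "v / D - (v / D)\<^sup>2 \<le> v' / D' - (v' / D')\<^sup>2"
    using v D by (intro diff_square_mono) auto
  moreover have "b / D' \<le> b / D" using D DD' assms by (simp add: frac_le)
  ultimately show ?thesis by (simp add: score v_def v'_def D_def D'_def)
qed

lemma cluster_score_antimono_cut:
  fixes M \<gamma> w b b' :: real
  assumes "M \<ge> 0" "\<gamma> \<ge> 0" "0 \<le> b'" "b' \<le> b" "0 \<le> w" "M + \<gamma> * (w + b') > 0"
  shows "cluster_score M \<gamma> w b \<le> cluster_score M \<gamma> w b'"
proof -
  define v v' where "v = w + b" and "v' = w + b'"
  define D D' where "D = M + \<gamma> * v" and "D' = M + \<gamma> * v'"
  have D': "D' > 0" using assms by (simp add: D'_def v'_def)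
  have v: "0 \<le> v'" "v' \<le> v" using assms by (auto simp: v_def v'_def)
  have D'D: "D' \<le> D" using v assms by (simp add: D_def D'_def mult_left_mono)
  with D' have D: "D > 0" by simp
  have "w / D \<le> w / D'" using D' D'D assms by (simp add: frac_le)
  moreover have "v' / D' \<le> v / D"
  proof -
    have "v' * D \<le> v * D'" using v assms by (simp add: D_def D'_def algebra_simps mult_left_mono)
    thus ?thesis using D D' by (simp add: divide_simps mult.commute)
  qed
  hence "(v' / D')\<^sup>2 \<le> (v / D)\<^sup>2" using v D' by (intro power_mono) auto
  ultimately show ?thesis by (simp add: cluster_score_def v_def v'_def D_def D'_def)
qed

lemma cluster_score_mono:
  fixes M \<gamma> w w' b b' :: real
  assumes "M \<ge> 0" "\<gamma> \<ge> 2" "0 \<le> w" "w \<le> w'" "0 \<le> b'" "b' \<le> b"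
    and "M + \<gamma> * (w + b) > 0" "M + \<gamma> * (w' + b') > 0"
  shows "cluster_score M \<gamma> w b \<le> cluster_score M \<gamma> w' b'"
proof -
  have "cluster_score M \<gamma> w b \<le> cluster_score M \<gamma> w' b"
    using assms by (intro cluster_score_mono_inner) auto
  also have "\<dots> \<le> cluster_score M \<gamma> w' b'"
    using assms by (intro cluster_score_antimono_cut) auto
  finally show ?thesis .
qed

lemma vol_eq_inner_weight_plus_cut_weight:
  assumes "finite V" "c \<subseteq> V"
  shows "vol V E c = inner_weight E c + cut_weight V E c"
proof -
  have "(\<Sum>j\<in>V. E i j) = (\<Sum>j\<in>c. E i j) + (\<Sum>j\<in>V - c. E i j)" for i
    using sum.subset_diff[OF assms(2,1), of "E i"] by linarith
  thus ?thesis by (simp add: vol_def inner_weight_def cut_weight_def sum.distrib)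
qed

lemma asm_quality_eq_sum_cluster_score:
  assumes "finite V" "partition_on V C"
  shows "asm_quality M \<gamma> V E C
    = (\<Sum>c\<in>C. cluster_score M \<gamma> (inner_weight E c) (cut_weight V E c))"
  unfolding asm_quality_def
proof (rule sum.cong)
  fix c assume "c \<in> C"
  with assms have "vol V E c = inner_weight E c + cut_weight V E c"
    by (intro vol_eq_inner_weight_plus_cut_weight) (auto dest: partition_onD1)
  thus "inner_weight E c / (M + \<gamma> * vol V E c) - (vol V E c / (M + \<gamma> * vol V E c))\<^sup>2
      = cluster_score M \<gamma> (inner_weight E c) (cut_weight V E c)"
    by (simp add: cluster_score_def)
qed simp

lemma same_cluster_iff_mem:
  assumes "partition_on V C" "c \<in> C" "i \<in> c"
  shows "same_cluster C i j \<longleftrightarrow> j \<in> c"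
proof
  assume "same_cluster C i j"
  then obtain d where "d \<in> C" "i \<in> d" "j \<in> d" by (auto simp: same_cluster_def)
  with assms have "d = c" using disjointD[OF partition_onD2[OF assms(1)]] by blast
  with \<open>j \<in> d\<close> show "j \<in> c" by simp
qed (use assms in \<open>auto simp: same_cluster_def\<close>)

lemma
  assumes "consistent_improvement V C E E'" "partition_on V C" "c \<in> C"
  shows inner_weight_consistent_improvement: "inner_weight E c \<le> inner_weight E' c"
    and cut_weight_consistent_improvement: "cut_weight V E' c \<le> cut_weight V E c"
proof -
  have cV: "c \<subseteq> V" using assms(2,3) by (auto dest: partition_onD1)
  have "E i j \<le> E' i j" if "i \<in> c" "j \<in> c" for i j
    using assms(1) that cV same_cluster_iff_mem[OF assms(2,3)]
    unfolding consistent_improvement_def by blast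
  thus "inner_weight E c \<le> inner_weight E' c" unfolding inner_weight_def by (intro sum_mono) blast
  have "E' i j \<le> E i j" if "i \<in> c" "j \<in> V - c" for i j
    using assms(1) that cV same_cluster_iff_mem[OF assms(2,3)]
    unfolding consistent_improvement_def by blast
  thus "cut_weight V E' c \<le> cut_weight V E c" unfolding cut_weight_def by (intro sum_mono) blast
qed

lemma
  assumes "is_graph V E" "c \<subseteq> V"
  shows inner_weight_nonneg: "0 \<le> inner_weight E c"
    and cut_weight_nonneg: "0 \<le> cut_weight V E c"
  using assms by (auto simp: is_graph_def inner_weight_def cut_weight_def intro!: sum_nonneg)

theorem theorem6:
  fixes M \<gamma> :: real and V :: "'a set" and E E' :: "'a \<Rightarrow> 'a \<Rightarrow> real" and C :: "'a set set"
  assumes "M \<ge> 0" and "\<gamma> \<ge> 2"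
    and "is_graph V E" and "is_graph V E'"
    and "is_clustering V C"
    and "consistent_improvement V C E E'"
    and "asm_defined M \<gamma> V E C" and "asm_defined M \<gamma> V E' C"
  shows "asm_quality M \<gamma> V E' C \<ge> asm_quality M \<gamma> V E C"
proof -
  have fin: "finite V" using assms(3) by (simp add: is_graph_def)
  have part: "partition_on V C" using assms(5) by (simp add: is_clustering_def)
  have "cluster_score M \<gamma> (inner_weight E c) (cut_weight V E c)
      \<le> cluster_score M \<gamma> (inner_weight E' c) (cut_weight V E' c)" if c: "c \<in> C" for c
  proof (rule cluster_score_mono)
    have cV: "c \<subseteq> V" using part c by (auto dest: partition_onD1)
    show "0 \<le> inner_weight E c" "0 \<le> cut_weight V E' c"
      using inner_weight_nonneg[OF assms(3) cV] cut_weight_nonneg[OF assms(4) cV] .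
    show "inner_weight E c \<le> inner_weight E' c" "cut_weight V E' c \<le> cut_weight V E c"
      using assms(6) part c
      by (rule inner_weight_consistent_improvement, rule cut_weight_consistent_improvement)
    have "M + \<gamma> * (inner_weight F c + cut_weight V F c) > 0" if "asm_defined M \<gamma> V F C" for F
      using that c vol_eq_inner_weight_plus_cut_weight[OF fin cV, of F]
      by (auto simp: asm_defined_def)
    with assms(7,8) show "M + \<gamma> * (inner_weight E c + cut_weight V E c) > 0"
      "M + \<gamma> * (inner_weight E' c + cut_weight V E' c) > 0" by blast+
  qed (use assms(1,2) in auto)
  thus ?thesis by (simp add: asm_quality_eq_sum_cluster_score[OF fin part] sum_mono)
qed

end
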